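(* Let $S$ be a poset and let $S\otimes_i G_i$ and $S\otimes_i H_i$ be terminating ordered joins in the same shape $S$. Suppose $i_0\in S$ is a maximal element of $S$ and $G_i=H_i$ for all $i\neq i_0$. If $G_{i_0}\simeq_0 H_{i_0}$, then $S\otimes_i G_i \simeq_0 S\otimes_i H_i$.
   Context: All games are impartial combinatorial games under normal play; a game is determined by its set of options, and $G \to G'$ means $G'$ is an option of $G$. A game is terminating if it admits no infinite sequence of moves. $\mathbf{0}$ denotes the game with no options. The Grundy number of a terminating game $G$ is the ordinal $\Gamma_0(G)=\operatorname{mex}\{\Gamma_0(G') : G\to G'\}$, where $\operatorname{mex}\Lambda$ is the least ordinal not in the set of ordinals $\Lambda$. Games $G,H$ are $0$-equivalent, $G\simeq_0 H$, if $\Gamma_0(G)=\Gamma_0(H)$. Ordered join: for a poset $S$ and a family $(G_i)_{i\in S}$ of games, $S \otimes_i G_i$ is the game whose options are exactly the ordered joins $S \otimes_i G'_i$ obtained by choosing one $i_0\in S$ and an option $G_{i_0}\to G'_{i_0}$, and setting $G'_i=\mathbf{0}$ for all $i>i_0$ and $G'_i=G_i$ for all other $i\ne i_0$. *)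

theory Defs
  imports Main
begin

text \<open>Impartial games are represented as positions in a game graph: a type of positions
  together with a move relation mv, where mv x y means that y is an option of x.\<close>

definition terminating :: "('p \<Rightarrow> 'p \<Rightarrow> bool) \<Rightarrow> 'p \<Rightarrow> bool" where
  "terminating mv x \<longleftrightarrow> \<not> (\<exists>s. s 0 = x \<and> (\<forall>n. mv (s n) (s (Suc n))))"

text \<open>The relation "y is an option of the terminating position x"; it is well-founded.\<close>
definition term_rel :: "('p \<Rightarrow> 'p \<Rightarrow> bool) \<Rightarrow> ('p \<times> 'p) set" where
  "term_rel mv = {(y, x). mv x y \<and> terminating mv x}"

definition mex :: "'o::wellorder set \<Rightarrow> 'o" where
  "mex A = (LEAST a. a \<notin> A)"

text \<open>Grundy number, with values in a well-ordered type 'o playing the role of the ordinals.\<close>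
definition grundy :: "('p \<Rightarrow> 'p \<Rightarrow> bool) \<Rightarrow> 'p \<Rightarrow> 'o::wellorder" where
  "grundy mv = wfrec (term_rel mv) (\<lambda>g x. mex (g ` {y. mv x y}))"

definition equiv0 :: "'o::wellorder itself \<Rightarrow> ('p \<Rightarrow> 'p \<Rightarrow> bool) \<Rightarrow> 'p \<Rightarrow> 'p \<Rightarrow> bool" where
  "equiv0 _ mv x y \<longleftrightarrow> (grundy mv x :: 'o) = grundy mv y"

text \<open>Ordered join over the poset 'i: a position is a family of component positions
  (i \<mapsto> G_i); z is the zero game (a position with no options).\<close>
definition join_move :: "('g \<Rightarrow> 'g \<Rightarrow> bool) \<Rightarrow> 'g \<Rightarrow> ('i::order \<Rightarrow> 'g) \<Rightarrow> ('i \<Rightarrow> 'g) \<Rightarrow> bool" where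
  "join_move mv z F F' \<longleftrightarrow>
     (\<exists>i0 g'. mv (F i0) g' \<and>
        F' = (\<lambda>i. if i = i0 then g' else if i0 < i then z else F i))"

end

theory Submission
  imports Defs
begin

text \<open>Because \<open>i\<^sub>0\<close> is maximal, a move in component \<open>i\<^sub>0\<close> resets nothing, and a move in any
  other component \<open>j\<close> either resets \<open>i\<^sub>0\<close> to zero (if \<open>j < i\<^sub>0\<close>) or leaves it untouched. Call two
  joins related if they agree off \<open>i\<^sub>0\<close> and have \<open>0\<close>-equivalent \<open>i\<^sub>0\<close>-components. Every option of
  one of two related joins is then related to an option of the other, except when the Grundy
  value at \<open>i\<^sub>0\<close> was raised; in that case the mex property lets the opponent lower it back,
  giving an option of the option related to the other join. Such a relation forces equal Grundy
  numbers, by a nested well-founded induction.\<close>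

lemma wf_term_rel: "wf (term_rel mv)"
  unfolding wf_iff_no_infinite_down_chain term_rel_def
proof
  assume "\<exists>f. \<forall>i. (f (Suc i), f i) \<in> {(y, x). mv x y \<and> terminating mv x}"
  then obtain f where "\<And>i. mv (f i) (f (Suc i))" "terminating mv (f 0)" by blast
  then show False unfolding terminating_def by blast
qed

lemma terminating_option: "terminating mv x \<Longrightarrow> mv x y \<Longrightarrow> terminating mv y"
  unfolding terminating_def
proof (elim contrapos_nn)
  assume "mv x y" "\<exists>s. s 0 = y \<and> (\<forall>n. mv (s n) (s (Suc n)))"
  then obtain s where s: "s 0 = y" "\<forall>n. mv (s n) (s (Suc n))" by blast
  let ?t = "\<lambda>n. case n of 0 \<Rightarrow> x | Suc m \<Rightarrow> s m"
  have "\<forall>n. mv (?t n) (?t (Suc n))" using s \<open>mv x y\<close> by (auto split: nat.split)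
  then show "\<exists>s. s 0 = x \<and> (\<forall>n. mv (s n) (s (Suc n)))" by (intro exI[of _ ?t]) auto
qed

lemma terminating_tranclp:
  assumes "terminating mv x" "mv\<^sup>+\<^sup>+ x y"
  shows "terminating mv y"
  using assms(2,1)
proof (induction rule: tranclp_induct)
  case (base y)
  from base.prems base.hyps show ?case by (rule terminating_option)
next
  case (step y z)
  from step.IH[OF step.prems] step.hyps(2) show ?case by (rule terminating_option)
qed

lemma tranclp_imp_term_rel_trancl:
  assumes "terminating mv x" "mv\<^sup>+\<^sup>+ x y"
  shows "(y, x) \<in> (term_rel mv)\<^sup>+"
  using assms(2,1)
proof (induction rule: tranclp_induct)
  case (step y z)
  then have "(z, y) \<in> term_rel mv"
    using terminating_tranclp[OF step.prems step.hyps(1)] step.hyps(2) unfolding term_rel_def by blast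
  then show ?case using step.IH[OF step.prems] by (rule trancl_into_trancl2)
qed (auto simp: term_rel_def)

lemma terminating_induct [consumes 1, case_names less]:
  assumes "terminating mv x"
    and "\<And>x. terminating mv x \<Longrightarrow> (\<And>y. mv\<^sup>+\<^sup>+ x y \<Longrightarrow> P y) \<Longrightarrow> P x"
  shows "P x"
proof -
  have "terminating mv x \<longrightarrow> P x"
  proof (induction x rule: wf_induct_rule[OF wf_trancl[OF wf_term_rel[of mv]]])
    case (1 x)
    show ?case
    proof
      assume "terminating mv x"
      then show "P x"
        using 1 assms(2) tranclp_imp_term_rel_trancl[of mv x] terminating_tranclp[of mv x] by blast
    qed
  qed
  with assms(1) show ?thesis by blast
qed

lemma grundy_eq: "terminating mv x \<Longrightarrow> grundy mv x = mex (grundy mv ` {y. mv x y})"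
  unfolding grundy_def
  by (subst wfrec[OF wf_term_rel]) (auto simp: cut_def term_rel_def intro!: arg_cong[where f = mex])

lemma grundy_option_neq:
  assumes "\<And>y. (grundy mv y :: 'o::wellorder) < b" "terminating mv x" "mv x y"
  shows "(grundy mv y :: 'o) \<noteq> grundy mv x"
proof -
  have "b \<notin> (grundy mv ` {y. mv x y} :: 'o set)" using assms(1) by (auto simp: less_irrefl)
  then have "mex (grundy mv ` {y. mv x y} :: 'o set) \<notin> grundy mv ` {y. mv x y}"
    unfolding mex_def by (rule LeastI)
  then show ?thesis using grundy_eq[OF assms(2)] assms(3) by (metis image_eqI mem_Collect_eq)
qed

lemma grundy_option_lower:
  assumes "terminating mv x" "a < (grundy mv x :: 'o::wellorder)"
  obtains y where "mv x y" "grundy mv y = a"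
proof -
  have "a \<in> grundy mv ` {y. mv x y}"
    using not_less_Least assms(2) unfolding grundy_eq[OF assms(1)] mex_def by blast
  then show ?thesis using that by blast
qed

lemma grundy_le_if_options_avoid:
  assumes "terminating mv x" "\<And>y. mv x y \<Longrightarrow> (grundy mv y :: 'o::wellorder) \<noteq> v"
  shows "(grundy mv x :: 'o) \<le> v"
proof -
  have "v \<notin> grundy mv ` {y. mv x y}" using assms(2) by blast
  then show ?thesis unfolding grundy_eq[OF assms(1)] mex_def by (rule Least_le)
qed

lemma grundy_eq_if_bisim:
  fixes R :: "'p \<Rightarrow> 'p \<Rightarrow> bool"
  assumes bound: "\<And>y. (grundy mv y :: 'o::wellorder) < b"
    and sym: "\<And>x y. R x y \<Longrightarrow> R y x"
    and R_terminating: "\<And>x y. R x y \<Longrightarrow> terminating mv x"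
    and step: "\<And>x y x'. R x y \<Longrightarrow> mv x x' \<Longrightarrow>
      (\<exists>y'. mv y y' \<and> R x' y') \<or> (\<exists>x''. mv x' x'' \<and> R x'' y)"
    and "R x y"
  shows "(grundy mv x :: 'o) = grundy mv y"
proof -
  let ?g = "grundy mv :: 'p \<Rightarrow> 'o"
  have two_steps: "mv\<^sup>+\<^sup>+ u w" if "mv u v" "mv v w" for u v w
    using that by (meson tranclp.r_into_trancl tranclp.trancl_into_trancl)
  have "\<forall>y. R x y \<longrightarrow> ?g x = ?g y" using R_terminating[OF \<open>R x y\<close>]
  proof (induction x rule: terminating_induct)
    case (less x)
    note IH_x = less.IH
    show ?case
    proof (intro allI impI)
      fix y assume "R x y"
      from R_terminating[OF sym[OF this]] this show "?g x = ?g y"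
      proof (induction y rule: terminating_induct)
        case (less y)
        have "?g x \<le> ?g y"
        proof (rule grundy_le_if_options_avoid[OF \<open>terminating mv x\<close>])
          fix x' assume x': "mv x x'"
          with step[OF \<open>R x y\<close>] consider y' where "mv y y'" "R x' y'"
            | x'' where "mv x' x''" "R x'' y" by blast
          then show "?g x' \<noteq> ?g y"
          proof cases
            case 1
            then have "?g x' = ?g y'" using IH_x[OF tranclp.r_into_trancl[of mv, OF x']] by blast
            then show ?thesis using grundy_option_neq[OF bound \<open>terminating mv y\<close> 1(1)] by simp
          next
            case 2
            then have "?g x'' = ?g y" using IH_x[OF two_steps[OF x' 2(1)]] by blast
            then show ?thesis
              using grundy_option_neq[OF bound terminating_option[OF \<open>terminating mv x\<close> x'] 2(1)]
              by simp
          qed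
        qed
        moreover have "?g y \<le> ?g x"
        proof (rule grundy_le_if_options_avoid[OF \<open>terminating mv y\<close>])
          fix y' assume y': "mv y y'"
          with step[OF sym[OF \<open>R x y\<close>]] consider x' where "mv x x'" "R y' x'"
            | y'' where "mv y' y''" "R y'' x" by blast
          then show "?g y' \<noteq> ?g x"
          proof cases
            case 1
            then have "?g x' = ?g y'" using IH_x[OF tranclp.r_into_trancl[of mv, OF 1(1)]] sym by blast
            then show ?thesis using grundy_option_neq[OF bound \<open>terminating mv x\<close> 1(1)] by simp
          next
            case 2
            then have "?g x = ?g y''" using less.IH[OF two_steps[OF y' 2(1)]] sym by blast
            then show ?thesis
              using grundy_option_neq[OF bound terminating_option[OF \<open>terminating mv y\<close> y'] 2(1)]
              by simp
          qed
        qed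
        ultimately show ?case by simp
      qed
    qed
  qed
  with \<open>R x y\<close> show ?thesis by blast
qed

definition join_option :: "'g \<Rightarrow> ('i::order \<Rightarrow> 'g) \<Rightarrow> 'i \<Rightarrow> 'g \<Rightarrow> 'i \<Rightarrow> 'g" where
  "join_option z F j g = (\<lambda>i. if i = j then g else if j < i then z else F i)"

lemma join_move_iff: "join_move mv z F F' \<longleftrightarrow> (\<exists>j g. mv (F j) g \<and> F' = join_option z F j g)"
  unfolding join_move_def join_option_def ..

lemma join_option_maximal:
  assumes "\<forall>i. \<not> i0 < i"
  shows "join_option z F i0 g = F(i0 := g)"
  using assms by (auto simp: join_option_def)

lemma join_move_maximal:
  assumes "\<forall>i. \<not> i0 < i" "mv (F i0) g"
  shows "join_move mv z F (F(i0 := g))"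
  using assms join_option_maximal[OF assms(1)] join_move_iff by metis

lemma terminating_join_maximal_component:
  assumes maximal: "\<forall>i. \<not> i0 < i" and "terminating (join_move mv z) F"
  shows "terminating mv (F i0)"
  unfolding terminating_def
proof
  assume "\<exists>s. s 0 = F i0 \<and> (\<forall>n. mv (s n) (s (Suc n)))"
  then obtain s where s: "s 0 = F i0" "\<And>n. mv (s n) (s (Suc n))" by blast
  have "\<And>n. join_move mv z (F(i0 := s n)) (F(i0 := s (Suc n)))"
    using join_move_maximal[OF maximal, of mv "F(i0 := s n)" for n] s(2) by simp
  moreover have "F(i0 := s 0) = F" using s(1) by auto
  ultimately have "\<exists>s. s 0 = F \<and> (\<forall>n. join_move mv z (s n) (s (Suc n)))"
    by (intro exI[of _ "\<lambda>n. F(i0 := s n)"]) simp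
  with assms(2) show False unfolding terminating_def by blast
qed

definition equiv0_at :: "'o::wellorder itself \<Rightarrow> ('g \<Rightarrow> 'g \<Rightarrow> bool) \<Rightarrow> 'i \<Rightarrow> ('i \<Rightarrow> 'g) \<Rightarrow> ('i \<Rightarrow> 'g) \<Rightarrow> bool" where
  "equiv0_at T mv i0 F F' \<longleftrightarrow> (\<forall>i. i \<noteq> i0 \<longrightarrow> F i = F' i) \<and> equiv0 T mv (F i0) (F' i0)"

lemma equiv0_at_sym: "equiv0_at T mv i0 F F' \<Longrightarrow> equiv0_at T mv i0 F' F"
  unfolding equiv0_at_def equiv0_def by auto

lemma join_option_matched:
  fixes F F' F1 :: "'i::order \<Rightarrow> 'g" and T :: "'o::wellorder itself"
  assumes maximal: "\<forall>i. \<not> i0 < i"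
    and bound: "\<And>y. (grundy mv y :: 'o) < b"
    and terminating_joins: "terminating (join_move mv z) F" "terminating (join_move mv z) F'"
    and rel: "equiv0_at TYPE('o) mv i0 F F'"
    and move: "join_move mv z F F1"
  shows "(\<exists>F1'. join_move mv z F' F1' \<and> equiv0_at TYPE('o) mv i0 F1 F1')
    \<or> (\<exists>F2. join_move mv z F1 F2 \<and> equiv0_at TYPE('o) mv i0 F2 F')"
proof -
  let ?g = "grundy mv :: 'g \<Rightarrow> 'o"
  have agree: "\<forall>i. i \<noteq> i0 \<longrightarrow> F i = F' i" and eq: "?g (F i0) = ?g (F' i0)"
    using rel unfolding equiv0_at_def equiv0_def by auto
  have tF: "terminating mv (F i0)" and tF': "terminating mv (F' i0)"
    using terminating_join_maximal_component[OF maximal terminating_joins(1)]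
      terminating_join_maximal_component[OF maximal terminating_joins(2)] .
  obtain j g where g: "mv (F j) g" and F1: "F1 = join_option z F j g"
    using move unfolding join_move_iff by blast
  show ?thesis
  proof (cases "j = i0")
    case True
    then have g0: "mv (F i0) g" and F1_upd: "F1 = F(i0 := g)"
      using g F1 join_option_maximal[OF maximal] by simp_all
    have "?g g \<noteq> ?g (F' i0)" using grundy_option_neq[OF bound tF g0] eq by simp
    then consider "?g g < ?g (F' i0)" | "?g (F i0) < ?g g"
      using eq by (metis linorder_neq_iff)
    then show ?thesis
    proof cases
      case 1
      then obtain h where h: "mv (F' i0) h" "?g h = ?g g" by (rule grundy_option_lower[OF tF'])
      have "equiv0_at TYPE('o) mv i0 F1 (F'(i0 := h))"
        using agree h(2) unfolding F1_upd equiv0_at_def equiv0_def by simp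
      with join_move_maximal[OF maximal, of mv F' h z] h(1) show ?thesis by blast
    next
      case 2
      then obtain g' where g': "mv g g'" "?g g' = ?g (F i0)"
        by (rule grundy_option_lower[OF terminating_option[OF tF g0]])
      have "join_move mv z F1 (F(i0 := g'))"
        using join_move_maximal[OF maximal, of mv "F(i0 := g)" g'] g'(1) unfolding F1_upd by simp
      moreover have "equiv0_at TYPE('o) mv i0 (F(i0 := g')) F'"
        using agree eq g'(2) unfolding equiv0_at_def equiv0_def by simp
      ultimately show ?thesis by blast
    qed
  next
    case False
    then have "mv (F' j) g" using g agree by simp
    then have "join_move mv z F' (join_option z F' j g)" unfolding join_move_iff by blast
    moreover have "equiv0_at TYPE('o) mv i0 F1 (join_option z F' j g)"
      using agree eq False unfolding F1 equiv0_at_def equiv0_def join_option_def by auto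
    ultimately show ?thesis by blast
  qed
qed

lemma grundy_join_eq_if_equiv0_at:
  fixes F F' :: "'i::order \<Rightarrow> 'g"
  assumes maximal: "\<forall>i. \<not> i0 < i"
    and bound: "\<And>y. (grundy mv y :: 'o::wellorder) < b"
    and boundJ: "\<And>F :: 'i \<Rightarrow> 'g. (grundy (join_move mv z) F :: 'o) < bJ"
    and "terminating (join_move mv z) F" "terminating (join_move mv z) F'"
    and "equiv0_at TYPE('o) mv i0 F F'"
  shows "(grundy (join_move mv z) F :: 'o) = grundy (join_move mv z) F'"
proof -
  let ?J = "join_move mv z :: ('i \<Rightarrow> 'g) \<Rightarrow> _"
  let ?R = "\<lambda>F F'. terminating ?J F \<and> terminating ?J F' \<and> equiv0_at TYPE('o) mv i0 F F'"
  show ?thesis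
  proof (rule grundy_eq_if_bisim[OF boundJ, of ?R])
    show "?R F F'" using assms(4-6) by blast
    show "?R F' F" if "?R F F'" for F F' using that equiv0_at_sym[of "TYPE('o)" mv i0 F F'] by blast
    show "terminating ?J F" if "?R F F'" for F F' using that by blast
    show "(\<exists>F1'. ?J F' F1' \<and> ?R F1 F1') \<or> (\<exists>F2. ?J F1 F2 \<and> ?R F2 F')"
      if R: "?R F F'" and move: "?J F F1" for F F' F1
    proof -
      have tF1: "terminating ?J F1" using terminating_option[of ?J F F1] R move by blast
      from R have "terminating ?J F" "terminating ?J F'" "equiv0_at TYPE('o) mv i0 F F'" by blast+
      from join_option_matched[OF maximal bound this move] consider
        F1' where "?J F' F1'" "equiv0_at TYPE('o) mv i0 F1 F1'"
        | F2 where "?J F1 F2" "equiv0_at TYPE('o) mv i0 F2 F'" by blast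
      then show ?thesis
        by cases (use R tF1 terminating_option[of ?J F'] terminating_option[of ?J F1] in blast)+
    qed
  qed
qed

theorem mainTheorem3:
  fixes mv :: "'g \<Rightarrow> 'g \<Rightarrow> bool" and z :: 'g
    and G H :: "'i::order \<Rightarrow> 'g" and i0 :: 'i
  assumes ord_large: "\<forall>f :: ('i \<Rightarrow> 'g) \<Rightarrow> 'o::wellorder. \<exists>b. \<forall>x. f x < b"
    and zero: "\<forall>y. \<not> mv z y"
    and termG: "terminating (join_move mv z) G"
    and termH: "terminating (join_move mv z) H"
    and maximal: "\<forall>i. \<not> i0 < i"
    and same: "\<forall>i. i \<noteq> i0 \<longrightarrow> G i = H i"
    and eq0: "equiv0 TYPE('o) mv (G i0) (H i0)"
  shows "equiv0 TYPE('o) (join_move mv z) G H"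
proof -
  obtain b :: 'o where "\<forall>F :: 'i \<Rightarrow> 'g. grundy mv (F i0) < b"
    using ord_large by blast
  then have bound: "\<And>y. (grundy mv y :: 'o) < b" by (metis fun_upd_same)
  obtain bJ :: 'o where "\<And>F :: 'i \<Rightarrow> 'g. grundy (join_move mv z) F < bJ"
    using ord_large[rule_format, of "grundy (join_move mv z)"] by blast
  moreover have "equiv0_at TYPE('o) mv i0 G H"
    using same eq0 unfolding equiv0_at_def by blast
  ultimately show ?thesis
    using grundy_join_eq_if_equiv0_at[OF maximal bound _ termG termH] unfolding equiv0_def by blast
qed

end
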